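(* Let $\mathcal{F}=(X,\leq,R)$ be a GC-frame. Then $(\mathcal{T}_\leq,\cup,\cap,{}^\blacktriangle,{}^\blacktriangledown,\emptyset,X)$ is a BDLGC-algebra; in particular, $A^\blacktriangle\in\mathcal{T}_\leq$ and $A^\blacktriangledown\in\mathcal{T}_\leq$ for every $A\in\mathcal{T}_\leq$.
   Context: A GC-frame $(X,\leq,R)$ is a set $X$ with a quasiorder (reflexive, transitive relation) $\leq$ and a relation $R\subseteq X\times X$ such that $x\leq x'$, $x\,R\,y$ and $y'\leq y$ imply $x'\,R\,y'$. $\mathcal{T}_\leq$ is the set of all $B\subseteq X$ with: $x\in B$ and $x\leq y$ imply $y\in B$. For $A\subseteq X$: $A^\blacktriangle=\{x\in X\mid x\,R\,y\text{ for some }y\in A\}$ and $A^\blacktriangledown=\{x\in X\mid\text{for all }y,\ y\,R\,x\text{ implies }y\in A\}$. A BDLGC-algebra $(L,\vee,\wedge,f,g,0,1)$ is a bounded distributive lattice with maps $f,g\colon L\to L$ such that $f(a)\leq b\iff a\leq g(b)$ for all $a,b\in L$. *)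

theory Defs
  imports Main
begin

definition gc_frame :: "'a set \<Rightarrow> ('a \<Rightarrow> 'a \<Rightarrow> bool) \<Rightarrow> ('a \<Rightarrow> 'a \<Rightarrow> bool) \<Rightarrow> bool" where
  "gc_frame X le R \<longleftrightarrow>
     (\<forall>x y. le x y \<longrightarrow> x \<in> X \<and> y \<in> X) \<and>
     (\<forall>x\<in>X. le x x) \<and>
     (\<forall>x y z. le x y \<longrightarrow> le y z \<longrightarrow> le x z) \<and>
     (\<forall>x y. R x y \<longrightarrow> x \<in> X \<and> y \<in> X) \<and>
     (\<forall>x x' y y'. le x x' \<longrightarrow> R x y \<longrightarrow> le y' y \<longrightarrow> R x' y')"

definition upsets :: "'a set \<Rightarrow> ('a \<Rightarrow> 'a \<Rightarrow> bool) \<Rightarrow> 'a set set" where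
  "upsets X le = {B. B \<subseteq> X \<and> (\<forall>x y. x \<in> B \<longrightarrow> le x y \<longrightarrow> y \<in> B)}"

definition blackup :: "'a set \<Rightarrow> ('a \<Rightarrow> 'a \<Rightarrow> bool) \<Rightarrow> 'a set \<Rightarrow> 'a set" where
  "blackup X R A = {x \<in> X. \<exists>y\<in>A. R x y}"

definition blackdown :: "'a set \<Rightarrow> ('a \<Rightarrow> 'a \<Rightarrow> bool) \<Rightarrow> 'a set \<Rightarrow> 'a set" where
  "blackdown X R A = {x \<in> X. \<forall>y. R y x \<longrightarrow> y \<in> A}"

definition bounded_distrib_lattice_on ::
  "'b set \<Rightarrow> ('b \<Rightarrow> 'b \<Rightarrow> 'b) \<Rightarrow> ('b \<Rightarrow> 'b \<Rightarrow> 'b) \<Rightarrow> 'b \<Rightarrow> 'b \<Rightarrow> bool" where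
  "bounded_distrib_lattice_on L join meet zero one \<longleftrightarrow>
     zero \<in> L \<and> one \<in> L \<and>
     (\<forall>a\<in>L. \<forall>b\<in>L. join a b \<in> L \<and> meet a b \<in> L) \<and>
     (\<forall>a\<in>L. \<forall>b\<in>L. join a b = join b a \<and> meet a b = meet b a) \<and>
     (\<forall>a\<in>L. \<forall>b\<in>L. \<forall>c\<in>L. join (join a b) c = join a (join b c) \<and>
                          meet (meet a b) c = meet a (meet b c)) \<and>
     (\<forall>a\<in>L. \<forall>b\<in>L. join a (meet a b) = a \<and> meet a (join a b) = a) \<and>
     (\<forall>a\<in>L. \<forall>b\<in>L. \<forall>c\<in>L. meet a (join b c) = join (meet a b) (meet a c)) \<and>
     (\<forall>a\<in>L. join a zero = a \<and> meet a one = a)"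

definition lat_le :: "('b \<Rightarrow> 'b \<Rightarrow> 'b) \<Rightarrow> 'b \<Rightarrow> 'b \<Rightarrow> bool" where
  "lat_le meet a b \<longleftrightarrow> meet a b = a"

definition bdlgc_algebra ::
  "'b set \<Rightarrow> ('b \<Rightarrow> 'b \<Rightarrow> 'b) \<Rightarrow> ('b \<Rightarrow> 'b \<Rightarrow> 'b) \<Rightarrow> ('b \<Rightarrow> 'b) \<Rightarrow> ('b \<Rightarrow> 'b) \<Rightarrow> 'b \<Rightarrow> 'b \<Rightarrow> bool" where
  "bdlgc_algebra L join meet f g zero one \<longleftrightarrow>
     bounded_distrib_lattice_on L join meet zero one \<and>
     (\<forall>a\<in>L. f a \<in> L \<and> g a \<in> L) \<and>
     (\<forall>a\<in>L. \<forall>b\<in>L. lat_le meet (f a) b \<longleftrightarrow> lat_le meet a (g b))"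

end

theory Submission
  imports Defs
begin

text \<open>Upsets form a sublattice of the powerset of \<open>X\<close> containing \<open>{}\<close> and \<open>X\<close>, so they
  inherit distributivity. The stability condition of the frame makes \<open>A\<^sup>\<blacktriangle>\<close> and
  \<open>A\<^sup>\<blacktriangledown>\<close> upsets for every \<open>A\<close>, not only for upsets. The Galois connection
  \<open>A\<^sup>\<blacktriangle> \<subseteq> B \<longleftrightarrow> A \<subseteq> B\<^sup>\<blacktriangledown>\<close> is a set-theoretic identity: both sides say that
  \<open>x R y\<close> with \<open>y \<in> A\<close> forces \<open>x \<in> B\<close>.\<close>

lemma lat_le_Int_iff [simp]: "lat_le (\<inter>) A B \<longleftrightarrow> A \<subseteq> B"
  unfolding lat_le_def by blast

lemma upsets_bounded_distrib_lattice:
  assumes "\<And>x y. le x y \<Longrightarrow> y \<in> X"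
  shows "bounded_distrib_lattice_on (upsets X le) (\<union>) (\<inter>) {} X"
proof -
  have "X \<in> upsets X le" "{} \<in> upsets X le"
    unfolding upsets_def using assms by blast+
  moreover have "\<forall>A\<in>upsets X le. \<forall>B\<in>upsets X le. A \<union> B \<in> upsets X le \<and> A \<inter> B \<in> upsets X le"
    unfolding upsets_def by blast
  moreover have "\<forall>A\<in>upsets X le. A \<union> {} = A \<and> A \<inter> X = A"
    unfolding upsets_def by blast
  ultimately show ?thesis
    unfolding bounded_distrib_lattice_on_def by (simp add: Un_ac Int_ac Int_Un_distrib)
qed

lemma blackup_in_upsets:
  assumes "gc_frame X le R"
  shows "blackup X R A \<in> upsets X le"
proof -
  have "R y z" if "le x y" "R x z" for x y z
    using that assms unfolding gc_frame_def by metis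
  moreover have "y \<in> X" if "le x y" for x y
    using that assms unfolding gc_frame_def by blast
  ultimately show ?thesis
    unfolding upsets_def blackup_def by blast
qed

lemma blackdown_in_upsets:
  assumes "gc_frame X le R"
  shows "blackdown X R A \<in> upsets X le"
proof -
  have "R z x" if "le x y" "R z y" for x y z
    using that assms unfolding gc_frame_def by metis
  moreover have "y \<in> X" if "le x y" for x y
    using that assms unfolding gc_frame_def by blast
  ultimately show ?thesis
    unfolding upsets_def blackdown_def by blast
qed

lemma blackup_subset_iff_subset_blackdown:
  assumes "\<And>x y. R x y \<Longrightarrow> x \<in> X" "A \<subseteq> X" "B \<subseteq> X"
  shows "blackup X R A \<subseteq> B \<longleftrightarrow> A \<subseteq> blackdown X R B"
  unfolding blackup_def blackdown_def using assms by blast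

theorem lemma3p6:
  fixes X :: "'a set" and le R :: "'a \<Rightarrow> 'a \<Rightarrow> bool"
  assumes "gc_frame X le R"
  shows "bdlgc_algebra (upsets X le) (\<union>) (\<inter>) (blackup X R) (blackdown X R) {} X
         \<and> (\<forall>A\<in>upsets X le. blackup X R A \<in> upsets X le \<and> blackdown X R A \<in> upsets X le)"
proof -
  have le_in_X: "\<And>x y. le x y \<Longrightarrow> y \<in> X" and R_in_X: "\<And>x y. R x y \<Longrightarrow> x \<in> X"
    using assms unfolding gc_frame_def by blast+
  have closed: "\<forall>A\<in>upsets X le. blackup X R A \<in> upsets X le \<and> blackdown X R A \<in> upsets X le"
    using blackup_in_upsets blackdown_in_upsets assms by blast
  have "\<forall>A\<in>upsets X le. \<forall>B\<in>upsets X le.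
      blackup X R A \<subseteq> B \<longleftrightarrow> A \<subseteq> blackdown X R B"
    using blackup_subset_iff_subset_blackdown[OF R_in_X] by (auto simp: upsets_def)
  then show ?thesis
    unfolding bdlgc_algebra_def
    using upsets_bounded_distrib_lattice[OF le_in_X] closed by simp
qed

end
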